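(* Consider the problem and algorithm AC2CD described in the context, let $\{x^k\}$ be a sequence produced by AC2CD, and assume $\lim_{k\to\infty}x^k=x^*$, where $x^*$ is a stationary point with multiplier $\lambda^*$ and $\mathcal A^+(x^* )\neq\emptyset$. Let $\zeta(x^* )=\min_{i\in\mathcal A^+(x^* )}|\nabla_i f(x^* )-\lambda^*|>0$. Let $k_A$ be the first outer iteration such that \[ \|z^{k,i}-x^*\|<\frac{\zeta(x^* )}{2L+\max\bigl\{\frac1{A_l},\frac{L^{\max}}{2(1-\gamma)}\bigr\}},\quad i=1,\dots,n,\quad\text{for all }k\ge k_A. \] Let $k_j$ be the first outer iteration such that $j(k)\notin\mathcal A(x^* )$ for all $k\ge k_j$, let $k_z$ be the first outer iteration such that $l_{j(k)}<z^{k,i}_{j(k)}<u_{j(k)}$ for $i=1,\dots,n+1$ and all $k\ge k_z$, and assume $k_A\ge\max\{k_j,k_z\}$. Then for all $k>k_A$, \[ x^k_h=x^*_h\quad\text{for all } h\in\mathcal A^+(x^* ). \]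
   Context: Problem: minimize $f(x)$ subject to $e^T x = b$ and $l_i \le x_i \le u_i$ ($i=1,\dots,n$), where $n\ge 2$, $e$ is the all-ones vector, $b\in\mathbb{R}$, $l_i\in\mathbb{R}\cup\{-\infty\}$, $u_i\in\mathbb{R}\cup\{+\infty\}$, $l_i<u_i$, and $f:\mathbb{R}^n\to\mathbb{R}$ is continuously differentiable with $\nabla f$ Lipschitz continuous on $\mathbb{R}^n$ with constant $L$. $\mathcal F$ is the feasible set, $e_i$ the $i$th unit vector. For $i\ne j$, $L_{i,j}>0$ are fixed constants such that for every $x\in\mathbb{R}^n$ and $s,t\in\mathbb{R}$, $|\nabla f(x+s(e_i-e_j))^T(e_i-e_j)-\nabla f(x+t(e_i-e_j))^T(e_i-e_j)|\le L_{i,j}|s-t|$; $L_{i,i}=0$; $L^{\max}=\max_{i,j}L_{i,j}$. For $x\in\mathcal F$, $D_h(x)=\min\{x_h-l_h,u_h-x_h\}$. A point $x^*\in\mathcal F$ is stationary iff there is $\lambda^*\in\mathbb{R}$ with $\nabla_i f(x^* )\ge\lambda^*$ if $x^*_i=l_i$, $=\lambda^*$ if $l_i<x^*_i<u_i$, $\le\lambda^*$ if $x^*_i=u_i$ (the limit of an AC2CD sequence is stationary under the standing assumptions). Active set $\mathcal A(x^* )=\{i:x^*_i=l_i\}\cup\{i:x^*_i=u_i\}$ and $\mathcal A^+(x^* )=\mathcal A(x^* )\cap\{i:\nabla_if(x^* )\ne\lambda^*\}$. Algorithm AC2CD with parameters $\tau\in(0,1]$, $\gamma,\delta\in(0,1)$,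 $0<A_l\le A_u<\infty$ and starting point $x^0\in\mathcal F$: for $k=0,1,2,\dots$: let $D^k=\max_h D_h(x^k)$; choose $j(k)$ with $D_{j(k)}(x^k)\ge\tau D^k$; choose a permutation $(p^k_1,\dots,p^k_n)$ of $\{1,\dots,n\}$; set $z^{k,1}=x^k$; for $i=1,\dots,n$ (inner iteration $(k,i)$): $g^{k,i}=\nabla_{j(k)}f(z^{k,i})-\nabla_{p^k_i}f(z^{k,i})$, $d^{k,i}=g^{k,i}(e_{p^k_i}-e_{j(k)})$; $\bar\alpha^{k,i}=\min\{u_{p^k_i}-z^{k,i}_{p^k_i},z^{k,i}_{j(k)}-l_{j(k)}\}/g^{k,i}$ if $g^{k,i}>0$, $=\min\{z^{k,i}_{p^k_i}-l_{p^k_i},u_{j(k)}-z^{k,i}_{j(k)}\}/|g^{k,i}|$ if $g^{k,i}<0$, $=0$ if $g^{k,i}=0$; choose $A^{k,i}\in[A_l,A_u]$, set $\Delta^{k,i}=\min\{\bar\alpha^{k,i},A^{k,i}\}$; starting from $\alpha=\Delta^{k,i}$, while $f(z^{k,i}+\alpha d^{k,i})>f(z^{k,i})+\gamma\alpha\nabla f(z^{k,i})^Td^{k,i}$ replace $\alpha$ by $\delta\alpha$; $\alpha^{k,i}$ is the final $\alpha$ and $z^{k,i+1}=z^{k,i}+\alpha^{k,i}d^{k,i}$. Then $x^{k+1}=z^{k,n+1}$. Standing assumptions: $\mathcal L_0=\{x\in\mathcal F: f(x)\le f(x^0)\}$ is nonempty and compact, and every $x\in\mathcal L_0$ has some index $i$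 with $l_i<x_i<u_i$. *)

theory Defs
  imports "HOL-Analysis.Analysis"
begin

text \<open>Vectors live in real^'n (Euclidean norm); bounds are extended reals:
  l i is real or -\<infinity>, u i is real or +\<infinity>.  The gradient of f is given
  as a function grad with (grad x) $ i = nabla_i f(x).\<close>

definition feasible :: "('n::finite \<Rightarrow> ereal) \<Rightarrow> ('n \<Rightarrow> ereal) \<Rightarrow> real \<Rightarrow> real^'n \<Rightarrow> bool" where
  "feasible l u b x \<longleftrightarrow> (\<Sum>i\<in>UNIV. x $ i) = b \<and> (\<forall>i. l i \<le> ereal (x $ i) \<and> ereal (x $ i) \<le> u i)"

definition bdist :: "('n::finite \<Rightarrow> ereal) \<Rightarrow> ('n \<Rightarrow> ereal) \<Rightarrow> real^'n \<Rightarrow> 'n \<Rightarrow> ereal" where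
  "bdist l u x h = min (ereal (x $ h) - l h) (u h - ereal (x $ h))"

definition bdist_max :: "('n::finite \<Rightarrow> ereal) \<Rightarrow> ('n \<Rightarrow> ereal) \<Rightarrow> real^'n \<Rightarrow> ereal" where
  "bdist_max l u x = Max (range (bdist l u x))"

text \<open>Maximum feasible stepsize bar-alpha along g (e_p - e_j) from z (possibly +\<infinity>).\<close>
definition alpha_bar :: "('n::finite \<Rightarrow> ereal) \<Rightarrow> ('n \<Rightarrow> ereal) \<Rightarrow> real^'n \<Rightarrow> 'n \<Rightarrow> 'n \<Rightarrow> real \<Rightarrow> ereal" where
  "alpha_bar l u z jj pp g =
     (if g > 0 then min (u pp - ereal (z $ pp)) (ereal (z $ jj) - l jj) / ereal g
      else if g < 0 then min (ereal (z $ pp) - l pp) (u jj - ereal (z $ jj)) / ereal \<bar>g\<bar>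
      else 0)"

text \<open>The sequences x (outer iterates), z (inner iterates z^{k,i}, i = 1..n+1),
  j (the index j(k)), p (permutations p^k_i, i = 1..n), A (A^{k,i}) and alpha
  (accepted stepsizes alpha^{k,i}) are produced by AC2CD with parameters
  tau, gamma, delta, Al, Au.  The Armijo backtracking loop is expressed by:
  alpha^{k,i} = Delta^{k,i} delta^m with m the least number of reductions for which
  the sufficient decrease condition holds.\<close>
definition ac2cd ::
  "(real^'n::finite \<Rightarrow> real) \<Rightarrow> (real^'n \<Rightarrow> real^'n) \<Rightarrow> ('n \<Rightarrow> ereal) \<Rightarrow> ('n \<Rightarrow> ereal) \<Rightarrow> real \<Rightarrow>
   real \<Rightarrow> real \<Rightarrow> real \<Rightarrow> real \<Rightarrow> real \<Rightarrow>
   (nat \<Rightarrow> real^'n) \<Rightarrow> (nat \<Rightarrow> nat \<Rightarrow> real^'n) \<Rightarrow> (nat \<Rightarrow> 'n) \<Rightarrow> (nat \<Rightarrow> nat \<Rightarrow> 'n) \<Rightarrow>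
   (nat \<Rightarrow> nat \<Rightarrow> real) \<Rightarrow> (nat \<Rightarrow> nat \<Rightarrow> real) \<Rightarrow> bool" where
  "ac2cd f grad l u b tau gamma delta Al Au x z j p A alpha \<longleftrightarrow>
     feasible l u b (x 0) \<and>
     (\<forall>k.
        bdist l u (x k) (j k) \<ge> ereal tau * bdist_max l u (x k) \<and>
        bij_betw (p k) {1..CARD('n)} UNIV \<and>
        z k 1 = x k \<and>
        (\<forall>i\<in>{1..CARD('n)}.
           let g = grad (z k i) $ j k - grad (z k i) $ p k i;
               d = g *\<^sub>R (axis (p k i) 1 - axis (j k) 1);
               Delta = real_of_ereal (min (alpha_bar l u (z k i) (j k) (p k i) g) (ereal (A k i)));
               armijo = (\<lambda>a. f (z k i + a *\<^sub>R d) \<le> f (z k i) + gamma * a * (grad (z k i) \<bullet> d))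
           in A k i \<in> {Al..Au} \<and>
              (\<exists>m::nat. alpha k i = Delta * delta ^ m \<and> armijo (alpha k i) \<and>
                  (\<forall>m'<m. \<not> armijo (Delta * delta ^ m'))) \<and>
              z k (Suc i) = z k i + alpha k i *\<^sub>R d) \<and>
        x (Suc k) = z k (CARD('n) + 1))"

definition stationary :: "(real^'n::finite \<Rightarrow> real^'n) \<Rightarrow> ('n \<Rightarrow> ereal) \<Rightarrow> ('n \<Rightarrow> ereal) \<Rightarrow> real \<Rightarrow> real^'n \<Rightarrow> real \<Rightarrow> bool" where
  "stationary grad l u b xs lam \<longleftrightarrow> feasible l u b xs \<and>
     (\<forall>i. (ereal (xs $ i) = l i \<longrightarrow> grad xs $ i \<ge> lam) \<and>
          (l i < ereal (xs $ i) \<and> ereal (xs $ i) < u i \<longrightarrow> grad xs $ i = lam) \<and>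
          (ereal (xs $ i) = u i \<longrightarrow> grad xs $ i \<le> lam))"

definition active_set :: "('n::finite \<Rightarrow> ereal) \<Rightarrow> ('n \<Rightarrow> ereal) \<Rightarrow> real^'n \<Rightarrow> 'n set" where
  "active_set l u xs = {i. ereal (xs $ i) = l i} \<union> {i. ereal (xs $ i) = u i}"

definition active_plus :: "(real^'n::finite \<Rightarrow> real^'n) \<Rightarrow> ('n \<Rightarrow> ereal) \<Rightarrow> ('n \<Rightarrow> ereal) \<Rightarrow> real^'n \<Rightarrow> real \<Rightarrow> 'n set" where
  "active_plus grad l u xs lam = active_set l u xs \<inter> {i. grad xs $ i \<noteq> lam}"

end

theory Submission
  imports Defs
begin

(*
  Fix k >= kA and a strongly active index h, say xs_h = l_h (the case xs_h = u_h is
  symmetric).  At the inner iteration that moves h against j = j(k), Lipschitz continuity of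
  the gradient and stationarity (grad_j f xs = lam, grad_h f xs - lam >= zeta) give
  g = grad_j f z - grad_h f z < 0 with |g| > M ||z - xs||, where
  M = max (1/A_l) (L^max / (2 (1 - gamma))).  Hence the maximal feasible step is
  at most (z_h - l_h) / |g| < 1/M <= A_l, so Delta equals it, and the descent lemma along
  e_h - e_j (constant L_hj <= 2 (1 - gamma) M) shows that the Armijo test accepts Delta
  without backtracking.  The full step stops at a bound of h or of j; as z_j stays strictly
  inside its box, z_h = l_h = xs_h.  No later inner iteration moves coordinate h again.
*)

lemma descent_lemma:
  fixes f :: "'a::real_inner \<Rightarrow> real"
  assumes deriv: "\<And>y. (f has_derivative (\<lambda>h. grad y \<bullet> h)) (at y)"
    and lip: "\<And>s t. \<bar>grad (z + s *\<^sub>R v) \<bullet> v - grad (z + t *\<^sub>R v) \<bullet> v\<bar> \<le> K * \<bar>s - t\<bar>"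
    and "0 \<le> t"
  shows "f (z + t *\<^sub>R v) \<le> f z + t * (grad z \<bullet> v) + K * t\<^sup>2 / 2"
proof -
  define \<psi> where "\<psi> s = f (z + s *\<^sub>R v) - s * (grad z \<bullet> v) - K * s\<^sup>2 / 2" for s
  have "((\<lambda>s. f (z + s *\<^sub>R v)) has_real_derivative grad (z + s *\<^sub>R v) \<bullet> v) (at s)" for s
  proof -
    have "((\<lambda>s. f (z + s *\<^sub>R v)) has_derivative (\<lambda>h. grad (z + s *\<^sub>R v) \<bullet> (h *\<^sub>R v))) (at s)"
      by (rule has_derivative_compose[OF _ deriv, unfolded o_def]) (auto intro!: derivative_eq_intros)
    then show ?thesis
      by (rule has_derivative_imp_has_field_derivative) simp
  qed
  then have \<psi>': "(\<psi> has_real_derivative grad (z + s *\<^sub>R v) \<bullet> v - grad z \<bullet> v - K * s) (at s)" for s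
    unfolding \<psi>_def by (auto intro!: derivative_eq_intros)
  have "\<psi> t \<le> \<psi> 0"
  proof (rule DERIV_nonpos_imp_nonincreasing[OF \<open>0 \<le> t\<close>])
    fix s :: real
    assume "0 \<le> s"
    then have "grad (z + s *\<^sub>R v) \<bullet> v - grad z \<bullet> v - K * s \<le> 0"
      using lip[of s 0] by simp
    then show "\<exists>y. (\<psi> has_real_derivative y) (at s) \<and> y \<le> 0"
      using \<psi>' by blast
  qed
  then show ?thesis
    unfolding \<psi>_def by simp
qed

lemma lipschitz_along_scaleR:
  assumes "\<And>s t. \<bar>grad (z + s *\<^sub>R w) \<bullet> w - grad (z + t *\<^sub>R w) \<bullet> w\<bar> \<le> K * \<bar>s - t\<bar>"
  shows "\<bar>grad (z + s *\<^sub>R (c *\<^sub>R w)) \<bullet> (c *\<^sub>R w) - grad (z + t *\<^sub>R (c *\<^sub>R w)) \<bullet> (c *\<^sub>R w)\<bar>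
           \<le> K * c\<^sup>2 * \<bar>s - t\<bar>"
proof -
  have "\<bar>grad (z + s *\<^sub>R (c *\<^sub>R w)) \<bullet> (c *\<^sub>R w) - grad (z + t *\<^sub>R (c *\<^sub>R w)) \<bullet> (c *\<^sub>R w)\<bar>
      = \<bar>c\<bar> * \<bar>grad (z + (s * c) *\<^sub>R w) \<bullet> w - grad (z + (t * c) *\<^sub>R w) \<bullet> w\<bar>"
    by (simp add: right_diff_distrib[symmetric] abs_mult)
  also have "\<dots> \<le> \<bar>c\<bar> * (K * \<bar>s * c - t * c\<bar>)"
    using assms by (simp add: mult_left_mono)
  also have "\<dots> = K * c\<^sup>2 * \<bar>s - t\<bar>"
    by (simp add: left_diff_distrib[symmetric] abs_mult power2_eq_square)
  finally show ?thesis .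
qed

lemma armijo_holds_for_short_steps:
  fixes f :: "'a::real_inner \<Rightarrow> real"
  assumes deriv: "\<And>y. (f has_derivative (\<lambda>h. grad y \<bullet> h)) (at y)"
    and lip: "\<And>s t. \<bar>grad (z + s *\<^sub>R d) \<bullet> d - grad (z + t *\<^sub>R d) \<bullet> d\<bar> \<le> K * \<bar>s - t\<bar>"
    and t: "0 \<le> t" "K * t \<le> 2 * (1 - gamma) * - (grad z \<bullet> d)"
  shows "f (z + t *\<^sub>R d) \<le> f z + gamma * t * (grad z \<bullet> d)"
proof -
  have "K * t\<^sup>2 / 2 = t * (K * t) / 2"
    by (simp add: power2_eq_square)
  also have "\<dots> \<le> t * (2 * (1 - gamma) * - (grad z \<bullet> d)) / 2"
    using t by (intro divide_right_mono mult_left_mono) auto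
  finally show ?thesis
    using descent_lemma[OF deriv lip t(1)] by (simp add: algebra_simps)
qed

lemma backtracking_accepts_initial_step:
  fixes \<Delta> \<delta> :: "'a::monoid_mult"
  assumes "a = \<Delta> * \<delta> ^ m" "\<forall>m'<m. \<not> P (\<Delta> * \<delta> ^ m')" "P \<Delta>"
  shows "a = \<Delta>"
proof -
  have "m = 0"
  proof (rule ccontr)
    assume "m \<noteq> 0"
    then have "\<not> P (\<Delta> * \<delta> ^ 0)"
      using assms(2) by blast
    then show False
      using assms(3) by simp
  qed
  then show ?thesis
    using assms(1) by simp
qed

lemma value_after_reset:
  assumes "i0 \<in> {1..n}" "P i0"
    and reset: "\<And>i. i \<in> {1..n} \<Longrightarrow> P i \<Longrightarrow> v (Suc i) = c"
    and keep: "\<And>i. i \<in> {1..n} \<Longrightarrow> \<not> P i \<Longrightarrow> v (Suc i) = v i"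
  shows "v (n + 1) = c"
proof -
  have "v i = c" if "Suc i0 \<le> i" "i \<le> n + 1" for i
    using that
  proof (induction i rule: nat_induct_at_least)
    case base
    then show ?case
      using reset assms(1,2) by blast
  next
    case (Suc i)
    then have "i \<in> {1..n}"
      using assms(1) by auto
    then show ?case
      using reset keep Suc by (cases "P i") auto
  qed
  then show ?thesis
    using assms(1) by simp
qed

definition in_box :: "('n::finite \<Rightarrow> ereal) \<Rightarrow> ('n \<Rightarrow> ereal) \<Rightarrow> real^'n \<Rightarrow> bool" where
  "in_box l u z \<longleftrightarrow> (\<forall>i. l i \<le> ereal (z $ i) \<and> ereal (z $ i) \<le> u i)"

lemma feasible_imp_in_box: "feasible l u b x \<Longrightarrow> in_box l u x"
  by (simp add: feasible_def in_box_def)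

lemma coordinate_of_pair_step:
  assumes "pp \<noteq> jj"
  shows "(z + a *\<^sub>R (g *\<^sub>R (axis pp 1 - axis jj 1))) $ i =
           (if i = pp then z $ i + a * g else if i = jj then z $ i - a * g else z $ i)"
  using assms by (simp add: axis_def)

lemma pair_step_swap: "g *\<^sub>R (axis pp 1 - axis jj 1) = (- g) *\<^sub>R (axis jj 1 - axis pp (1::real))"
  by (simp add: scaleR_diff_right)

(* Together with pair_step_swap, this reduces the case g < 0 to g > 0. *)
lemma alpha_bar_swap: "alpha_bar l u z jj pp g = alpha_bar l u z pp jj (- g)"
  by (simp add: alpha_bar_def min.commute)

lemma alpha_bar_nonneg:
  assumes "in_box l u z"
  shows "0 \<le> alpha_bar l u z jj pp g"
  using assms by (auto simp: alpha_bar_def in_box_def intro!: zero_le_divide_ereal ereal_diff_positive)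

lemma in_box_le_alpha_bar_pos:
  assumes box: "in_box l u z" and "pp \<noteq> jj" "0 < g" "0 \<le> a"
    and a: "ereal a \<le> alpha_bar l u z jj pp g"
  shows "in_box l u (z + a *\<^sub>R (g *\<^sub>R (axis pp 1 - axis jj 1)))"
proof -
  have "ereal (a * g) \<le> min (u pp - ereal (z $ pp)) (ereal (z $ jj) - l jj)"
    using a \<open>0 < g\<close> by (simp add: alpha_bar_def ereal_le_divide_pos mult.commute)
  then have up: "ereal (z $ pp + a * g) \<le> u pp" and lo: "l jj \<le> ereal (z $ jj - a * g)"
    by (cases "u pp"; cases "l jj"; simp)+
  have "0 \<le> a * g"
    using \<open>0 < g\<close> \<open>0 \<le> a\<close> by simp
  then have "ereal (z $ pp) \<le> ereal (z $ pp + a * g)" "ereal (z $ jj - a * g) \<le> ereal (z $ jj)"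
    by simp_all
  then have "l pp \<le> ereal (z $ pp + a * g)" "ereal (z $ jj - a * g) \<le> u jj"
    using box unfolding in_box_def by (meson order_trans)+
  with up lo box show ?thesis
    unfolding in_box_def coordinate_of_pair_step[OF \<open>pp \<noteq> jj\<close>] by presburger
qed

lemma in_box_le_alpha_bar:
  assumes box: "in_box l u z" and "0 \<le> a" and a: "ereal a \<le> alpha_bar l u z jj pp g"
  shows "in_box l u (z + a *\<^sub>R (g *\<^sub>R (axis pp 1 - axis jj 1)))"
proof (cases "pp = jj \<or> g = 0")
  case True
  then show ?thesis
    using box by auto
next
  case False
  then consider "0 < g" | "0 < - g"
    by linarith
  then show ?thesis
  proof cases
    case 1
    then show ?thesis
      using in_box_le_alpha_bar_pos[OF box _ _ \<open>0 \<le> a\<close> a] False by blast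
  next
    case 2
    then show ?thesis
      unfolding pair_step_swap[of g pp jj]
      using in_box_le_alpha_bar_pos[OF box _ _ \<open>0 \<le> a\<close> a[unfolded alpha_bar_swap[of l u z jj pp g]]] False
      by blast
  qed
qed

lemma full_step_hits_bound:
  assumes "pp \<noteq> jj" "0 < g" and a: "ereal a = alpha_bar l u z jj pp g"
  defines "z' \<equiv> z + a *\<^sub>R (g *\<^sub>R (axis pp 1 - axis jj 1))"
  shows "ereal (z' $ pp) = u pp \<or> ereal (z' $ jj) = l jj"
proof -
  have "min (u pp - ereal (z $ pp)) (ereal (z $ jj) - l jj) / ereal g = ereal a"
    using a \<open>0 < g\<close> by (simp add: alpha_bar_def)
  then have "min (u pp - ereal (z $ pp)) (ereal (z $ jj) - l jj) = ereal (a * g)"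
    using \<open>0 < g\<close> by (simp add: ereal_divide_eq mult.commute)
  then have "ereal (z $ pp + a * g) = u pp \<or> ereal (z $ jj - a * g) = l jj"
    by (cases "u pp"; cases "l jj"; auto simp: min_def split: if_splits)
  then show ?thesis
    unfolding z'_def coordinate_of_pair_step[OF \<open>pp \<noteq> jj\<close>] using \<open>pp \<noteq> jj\<close> by simp
qed

(* One inner iteration (k,i) of AC2CD: z = z^{k,i}, jj = j(k), pp = p^k_i, Ak = A^{k,i},
   a = alpha^{k,i} and z' = z^{k,i+1}. *)
definition inner_step ::
  "(real^'n::finite \<Rightarrow> real) \<Rightarrow> (real^'n \<Rightarrow> real^'n) \<Rightarrow> ('n \<Rightarrow> ereal) \<Rightarrow> ('n \<Rightarrow> ereal) \<Rightarrow>
   real \<Rightarrow> real \<Rightarrow> real \<Rightarrow> real \<Rightarrow> real^'n \<Rightarrow> 'n \<Rightarrow> 'n \<Rightarrow> real \<Rightarrow> real \<Rightarrow> real^'n \<Rightarrow> bool" where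
  "inner_step f grad l u gamma delta Al Au z jj pp Ak a z' \<longleftrightarrow>
     (let g = grad z $ jj - grad z $ pp;
          d = g *\<^sub>R (axis pp 1 - axis jj 1);
          Delta = real_of_ereal (min (alpha_bar l u z jj pp g) (ereal Ak));
          armijo = (\<lambda>a. f (z + a *\<^sub>R d) \<le> f z + gamma * a * (grad z \<bullet> d))
      in Ak \<in> {Al..Au} \<and>
         (\<exists>m::nat. a = Delta * delta ^ m \<and> armijo a \<and> (\<forall>m'<m. \<not> armijo (Delta * delta ^ m'))) \<and>
         z' = z + a *\<^sub>R d)"

lemma ac2cd_inner_step:
  fixes z :: "nat \<Rightarrow> nat \<Rightarrow> real^'n::finite"
  assumes "ac2cd f grad l u b tau gamma delta Al Au x z j p A alpha" "i \<in> {1..CARD('n)}"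
  shows "inner_step f grad l u gamma delta Al Au (z k i) (j k) (p k i) (A k i) (alpha k i) (z k (Suc i))"
  using assms unfolding ac2cd_def inner_step_def by blast

lemma ac2cd_outer_step:
  fixes z :: "nat \<Rightarrow> nat \<Rightarrow> real^'n::finite"
  assumes "ac2cd f grad l u b tau gamma delta Al Au x z j p A alpha"
  shows "feasible l u b (x 0)" "bij_betw (p k) {1..CARD('n)} UNIV"
    "z k 1 = x k" "x (Suc k) = z k (CARD('n) + 1)"
  using assms unfolding ac2cd_def by blast+

lemma inner_step_other_coordinate:
  assumes "inner_step f grad l u gamma delta Al Au z jj pp Ak a z'" "i \<noteq> pp" "i \<noteq> jj"
  shows "z' $ i = z $ i"
  using assms by (simp add: inner_step_def Let_def axis_def)

lemma inner_stepE:
  assumes "inner_step f grad l u gamma delta Al Au z jj pp Ak a z'" "in_box l u z" "0 < Al"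
  defines "g \<equiv> grad z $ jj - grad z $ pp"
  obtains \<Delta> m where "ereal \<Delta> = min (alpha_bar l u z jj pp g) (ereal Ak)" "0 \<le> \<Delta>" "Al \<le> Ak"
    "a = \<Delta> * delta ^ m" "z' = z + a *\<^sub>R (g *\<^sub>R (axis pp 1 - axis jj 1))"
    "\<forall>m'<m. \<not> f (z + (\<Delta> * delta ^ m') *\<^sub>R (g *\<^sub>R (axis pp 1 - axis jj 1)))
                 \<le> f z + gamma * (\<Delta> * delta ^ m') * (grad z \<bullet> (g *\<^sub>R (axis pp 1 - axis jj 1)))"
proof -
  define \<Delta> where "\<Delta> = real_of_ereal (min (alpha_bar l u z jj pp g) (ereal Ak))"
  have "Al \<le> Ak"
    using assms(1) by (simp add: inner_step_def Let_def)
  moreover have "0 \<le> alpha_bar l u z jj pp g"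
    using alpha_bar_nonneg[OF assms(2)] .
  ultimately have "0 \<le> min (alpha_bar l u z jj pp g) (ereal Ak)" "min (alpha_bar l u z jj pp g) (ereal Ak) \<le> ereal Ak"
    using \<open>0 < Al\<close> by auto
  then have \<Delta>: "ereal \<Delta> = min (alpha_bar l u z jj pp g) (ereal Ak)"
    unfolding \<Delta>_def by (cases "min (alpha_bar l u z jj pp g) (ereal Ak)") auto
  with that \<open>Al \<le> Ak\<close> \<open>0 \<le> min _ _\<close> show ?thesis
    using assms(1) unfolding inner_step_def Let_def g_def[symmetric] \<Delta>_def[symmetric]
    by (metis ereal_less_eq(5))
qed

lemma inner_step_in_box:
  assumes step: "inner_step f grad l u gamma delta Al Au z jj pp Ak a z'" and box: "in_box l u z"
    and "0 < Al" "0 \<le> delta" "delta \<le> 1"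
  shows "in_box l u z'"
proof -
  obtain \<Delta> m where \<Delta>: "ereal \<Delta> = min (alpha_bar l u z jj pp (grad z $ jj - grad z $ pp)) (ereal Ak)"
    "0 \<le> \<Delta>" and a: "a = \<Delta> * delta ^ m"
    and z': "z' = z + a *\<^sub>R ((grad z $ jj - grad z $ pp) *\<^sub>R (axis pp 1 - axis jj 1))"
    using inner_stepE[OF step box \<open>0 < Al\<close>] by blast
  have "0 \<le> delta ^ m" "delta ^ m \<le> 1"
    using \<open>0 \<le> delta\<close> \<open>delta \<le> 1\<close> by (simp_all add: power_le_one)
  then have "0 \<le> a" "a \<le> \<Delta>"
    using \<open>0 \<le> \<Delta>\<close> unfolding a by (simp_all add: mult_left_le)
  moreover have "ereal \<Delta> \<le> alpha_bar l u z jj pp (grad z $ jj - grad z $ pp)"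
    unfolding \<Delta> by simp
  ultimately show ?thesis
    unfolding z' by (intro in_box_le_alpha_bar[OF box]) (auto intro: order_trans[rotated])
qed

lemma ac2cd_in_box:
  fixes z :: "nat \<Rightarrow> nat \<Rightarrow> real^'n::finite"
  assumes alg: "ac2cd f grad l u b tau gamma delta Al Au x z j p A alpha"
    and "0 < Al" "0 \<le> delta" "delta \<le> 1"
  shows "in_box l u (x k)" and "i \<in> {1..CARD('n) + 1} \<Longrightarrow> in_box l u (z k i)"
proof -
  have inner: "in_box l u (z k i)" if "in_box l u (x k)" "1 \<le> i" "i \<le> CARD('n) + 1" for k i
    using that(2,3)
  proof (induction i rule: nat_induct_at_least)
    case base
    then show ?case
      using ac2cd_outer_step(3)[OF alg] that(1) by simp
  next
    case (Suc i)
    then show ?case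
      using inner_step_in_box[OF ac2cd_inner_step[OF alg] _ assms(2-4)] by simp
  qed
  show outer: "in_box l u (x k)" for k
  proof (induction k)
    case 0
    then show ?case
      using feasible_imp_in_box[OF ac2cd_outer_step(1)[OF alg]] .
  next
    case (Suc k)
    then show ?case
      using inner[of k "CARD('n) + 1"] ac2cd_outer_step(4)[OF alg] by simp
  qed
  show "i \<in> {1..CARD('n) + 1} \<Longrightarrow> in_box l u (z k i)"
    using inner[OF outer] by simp
qed

lemma armijo_holds_for_short_pair_steps:
  fixes z :: "real^'n::finite"
  assumes deriv: "\<And>y. (f has_derivative (\<lambda>h. grad y \<bullet> h)) (at y)"
    and lip: "\<And>s t. \<bar>grad (z + s *\<^sub>R (axis pp 1 - axis jj 1)) \<bullet> (axis pp 1 - axis jj 1)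
                     - grad (z + t *\<^sub>R (axis pp 1 - axis jj 1)) \<bullet> (axis pp 1 - axis jj 1)\<bar> \<le> K * \<bar>s - t\<bar>"
    and t: "0 \<le> t" "K * t \<le> 2 * (1 - gamma)"
  defines "d \<equiv> (grad z $ jj - grad z $ pp) *\<^sub>R (axis pp 1 - axis jj 1)"
  shows "f (z + t *\<^sub>R d) \<le> f z + gamma * t * (grad z \<bullet> d)"
proof -
  define g where "g = grad z $ jj - grad z $ pp"
  have "grad z \<bullet> d = g * (grad z $ pp - grad z $ jj)"
    by (simp add: d_def g_def inner_diff_right cart_eq_inner_axis inner_commute)
  also have "\<dots> = - g\<^sup>2"
    by (simp add: g_def power2_eq_square algebra_simps)
  finally have "grad z \<bullet> d = - g\<^sup>2" .
  have "K * g\<^sup>2 * t = (K * t) * g\<^sup>2"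
    by (simp only: ac_simps)
  also have "\<dots> \<le> 2 * (1 - gamma) * g\<^sup>2"
    using t(2) by (rule mult_right_mono) simp
  also have "\<dots> = 2 * (1 - gamma) * - (grad z \<bullet> d)"
    using \<open>grad z \<bullet> d = - g\<^sup>2\<close> by simp
  finally show ?thesis
    unfolding d_def g_def by (rule armijo_holds_for_short_steps[OF deriv lipschitz_along_scaleR[OF lip] t(1)])
qed

lemma inner_step_takes_full_step:
  fixes z :: "real^'n::finite"
  assumes step: "inner_step f grad l u gamma delta Al Au z jj pp Ak a z'"
    and deriv: "\<And>y. (f has_derivative (\<lambda>h. grad y \<bullet> h)) (at y)"
    and box: "in_box l u z"
    and lip: "\<And>s t. \<bar>grad (z + s *\<^sub>R (axis pp 1 - axis jj 1)) \<bullet> (axis pp 1 - axis jj 1)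
                     - grad (z + t *\<^sub>R (axis pp 1 - axis jj 1)) \<bullet> (axis pp 1 - axis jj 1)\<bar> \<le> K * \<bar>s - t\<bar>"
    and "pp \<noteq> jj" "0 < Al" "1 / Al \<le> M" "K \<le> 2 * (1 - gamma) * M" "gamma \<le> 1"
    and short: "alpha_bar l u z jj pp (grad z $ jj - grad z $ pp) \<le> ereal c" "c * M < 1"
  shows "ereal a = alpha_bar l u z jj pp (grad z $ jj - grad z $ pp)"
proof -
  define g where "g = grad z $ jj - grad z $ pp"
  define w :: "real^'n" where "w = axis pp 1 - axis jj 1"
  obtain \<Delta> m where \<Delta>: "ereal \<Delta> = min (alpha_bar l u z jj pp g) (ereal Ak)" "Al \<le> Ak"
    and a: "a = \<Delta> * delta ^ m"
    and backtrack: "\<forall>m'<m. \<not> f (z + (\<Delta> * delta ^ m') *\<^sub>R (g *\<^sub>R w))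
                              \<le> f z + gamma * (\<Delta> * delta ^ m') * (grad z \<bullet> (g *\<^sub>R w))"
    using inner_stepE[OF step box \<open>0 < Al\<close>] unfolding g_def w_def by blast
  obtain a0 where a0: "alpha_bar l u z jj pp g = ereal a0" "0 \<le> a0" "a0 \<le> c"
    using alpha_bar_nonneg[OF box, of jj pp g] short(1)[folded g_def]
    by (cases "alpha_bar l u z jj pp g") auto
  have "0 < M"
    using \<open>0 < Al\<close> \<open>1 / Al \<le> M\<close> by (smt (verit) divide_pos_pos)
  have "a0 * M < 1"
    using mult_right_mono[OF \<open>a0 \<le> c\<close> less_imp_le[OF \<open>0 < M\<close>]] short(2) by linarith
  then have "a0 < 1 / M"
    using \<open>0 < M\<close> by (simp add: field_simps)
  also have "1 / M \<le> Al"
    using \<open>0 < M\<close> \<open>1 / Al \<le> M\<close> \<open>0 < Al\<close> by (simp add: field_simps)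
  finally have "a0 < Ak"
    using \<open>Al \<le> Ak\<close> by linarith
  then have "\<Delta> = a0"
    using \<Delta>(1) a0(1) by simp
  have "K * a0 \<le> 2 * (1 - gamma)"
  proof -
    have "K * a0 \<le> 2 * (1 - gamma) * M * a0"
      using \<open>K \<le> 2 * (1 - gamma) * M\<close> \<open>0 \<le> a0\<close> by (rule mult_right_mono)
    also have "\<dots> \<le> 2 * (1 - gamma)"
      using \<open>a0 * M < 1\<close> \<open>gamma \<le> 1\<close> mult_left_mono[of "a0 * M" 1 "2 * (1 - gamma)"]
      by (simp add: algebra_simps)
    finally show ?thesis .
  qed
  then have "f (z + a0 *\<^sub>R (g *\<^sub>R w)) \<le> f z + gamma * a0 * (grad z \<bullet> (g *\<^sub>R w))"
    unfolding g_def w_def by (rule armijo_holds_for_short_pair_steps[OF deriv lip \<open>0 \<le> a0\<close>])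
  then have "a = \<Delta>"
    using backtracking_accepts_initial_step[OF a backtrack] \<open>\<Delta> = a0\<close> by blast
  then show ?thesis
    using \<open>\<Delta> = a0\<close> a0(1) g_def by simp
qed

lemma alpha_bar_le_distance_to_bound:
  fixes z xs :: "real^'n::finite"
  assumes box: "in_box l u z"
    and bound: "(ereal (xs $ h) = l h \<and> g < 0) \<or> (ereal (xs $ h) = u h \<and> 0 < g)"
  shows "alpha_bar l u z jj h g \<le> ereal (\<bar>z $ h - xs $ h\<bar> / \<bar>g\<bar>)"
proof -
  have zh: "l h \<le> ereal (z $ h)" "ereal (z $ h) \<le> u h"
    using box by (auto simp: in_box_def)
  have "g \<noteq> 0"
    using bound by auto
  then have dist: "ereal \<bar>g\<bar> * ereal (\<bar>z $ h - xs $ h\<bar> / \<bar>g\<bar>) = ereal \<bar>z $ h - xs $ h\<bar>"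
    by simp
  from bound show ?thesis
  proof (elim disjE conjE)
    assume lh: "ereal (xs $ h) = l h" and "g < 0"
    have "ereal (z $ h) - l h = ereal \<bar>z $ h - xs $ h\<bar>"
      using zh(1) unfolding lh[symmetric] by simp
    then have "min (ereal (z $ h) - l h) (u jj - ereal (z $ jj)) \<le> ereal \<bar>g\<bar> * ereal (\<bar>z $ h - xs $ h\<bar> / \<bar>g\<bar>)"
      unfolding dist by (simp add: min.coboundedI1)
    then show ?thesis
      using \<open>g < 0\<close> by (simp add: alpha_bar_def ereal_divide_le_pos)
  next
    assume uh: "ereal (xs $ h) = u h" and "0 < g"
    have "u h - ereal (z $ h) = ereal \<bar>z $ h - xs $ h\<bar>"
      using zh(2) unfolding uh[symmetric] by simp
    then have "min (u h - ereal (z $ h)) (ereal (z $ jj) - l jj) \<le> ereal \<bar>g\<bar> * ereal (\<bar>z $ h - xs $ h\<bar> / \<bar>g\<bar>)"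
      unfolding dist by (simp add: min.coboundedI1)
    then show ?thesis
      using \<open>0 < g\<close> by (simp add: alpha_bar_def ereal_divide_le_pos)
  qed
qed

lemma inner_step_lands_on_bound:
  fixes z :: "real^'n::finite"
  assumes step: "inner_step f grad l u gamma delta Al Au z jj h Ak a z'"
    and deriv: "\<And>y. (f has_derivative (\<lambda>h. grad y \<bullet> h)) (at y)"
    and box: "in_box l u z"
    and lip: "\<And>s t. \<bar>grad (z + s *\<^sub>R (axis h 1 - axis jj 1)) \<bullet> (axis h 1 - axis jj 1)
                     - grad (z + t *\<^sub>R (axis h 1 - axis jj 1)) \<bullet> (axis h 1 - axis jj 1)\<bar> \<le> K * \<bar>s - t\<bar>"
    and "h \<noteq> jj" "0 < Al" "1 / Al \<le> M" "K \<le> 2 * (1 - gamma) * M" "gamma \<le> 1"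
    and gap: "\<bar>z $ h - xs $ h\<bar> * M < \<bar>grad z $ jj - grad z $ h\<bar>"
    and bound: "(ereal (xs $ h) = l h \<and> grad z $ jj - grad z $ h < 0) \<or>
                (ereal (xs $ h) = u h \<and> 0 < grad z $ jj - grad z $ h)"
    and interior: "l jj < ereal (z' $ jj)" "ereal (z' $ jj) < u jj"
  shows "z' $ h = xs $ h"
proof -
  define g where "g = grad z $ jj - grad z $ h"
  have z': "z' = z + a *\<^sub>R (g *\<^sub>R (axis h 1 - axis jj 1))"
    using step by (simp add: inner_step_def Let_def g_def)
  have "0 < \<bar>g\<bar>"
    using bound by (auto simp: g_def)
  then have "\<bar>z $ h - xs $ h\<bar> / \<bar>g\<bar> * M < 1"
    using gap by (simp add: g_def field_simps)
  then have full: "ereal a = alpha_bar l u z jj h g"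
    using inner_step_takes_full_step[OF step deriv box lip \<open>h \<noteq> jj\<close> \<open>0 < Al\<close> \<open>1 / Al \<le> M\<close>
        \<open>K \<le> 2 * (1 - gamma) * M\<close> \<open>gamma \<le> 1\<close> alpha_bar_le_distance_to_bound[OF box bound]]
    by (simp add: g_def)
  from bound show ?thesis
  proof (elim disjE conjE)
    assume lh: "ereal (xs $ h) = l h" and "grad z $ jj - grad z $ h < 0"
    then have "0 < - g"
      by (simp add: g_def)
    from full_step_hits_bound[OF \<open>h \<noteq> jj\<close>[symmetric] this full[unfolded alpha_bar_swap[of l u z jj h]]]
    have "ereal (z' $ h) = l h"
      using interior unfolding z' pair_step_swap[of g h jj] by auto
    then show ?thesis
      using lh by (metis ereal.inject)
  next
    assume uh: "ereal (xs $ h) = u h" and "0 < grad z $ jj - grad z $ h"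
    then have "0 < g"
      by (simp add: g_def)
    from full_step_hits_bound[OF \<open>h \<noteq> jj\<close> this full]
    have "ereal (z' $ h) = u h"
      using interior unfolding z' by auto
    then show ?thesis
      using uh by (metis ereal.inject)
  qed
qed

lemma stationary_gradient_at_free:
  assumes "stationary grad l u b xs lam" "i \<notin> active_set l u xs"
  shows "grad xs $ i = lam"
proof -
  have "l i \<le> ereal (xs $ i)" "ereal (xs $ i) \<le> u i"
    using assms(1) by (auto simp: stationary_def feasible_def)
  with assms(2) have "l i < ereal (xs $ i) \<and> ereal (xs $ i) < u i"
    by (auto simp: active_set_def order.order_iff_strict)
  with assms(1) show ?thesis
    by (simp add: stationary_def)
qed

lemma strongly_active_gradient_gap:
  fixes z xs :: "real^'n::finite"
  assumes lipschitz: "\<And>y w. norm (grad y - grad w) \<le> L * norm (y - w)"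
    and stat: "stationary grad l u b xs lam"
    and h: "h \<in> active_plus grad l u xs lam" and jj: "jj \<notin> active_set l u xs"
    and close: "norm (z - xs) * (2 * L + M) < \<bar>grad xs $ h - lam\<bar>" and "0 \<le> M"
  defines "g \<equiv> grad z $ jj - grad z $ h"
  shows "\<bar>z $ h - xs $ h\<bar> * M < \<bar>g\<bar>"
    and "(ereal (xs $ h) = l h \<and> g < 0) \<or> (ereal (xs $ h) = u h \<and> 0 < g)"
proof -
  define r where "r = norm (z - xs)"
  have "grad xs $ h \<noteq> lam"
    using h by (simp add: active_plus_def)
  have "0 \<le> r * M"
    using \<open>0 \<le> M\<close> by (simp add: r_def)
  have expand: "r * (2 * L + M) = 2 * (L * r) + r * M"
    by (simp add: algebra_simps)
  have grad_close: "\<bar>grad z $ i - grad xs $ i\<bar> \<le> L * r" for i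
    using component_le_norm_cart[of "grad z - grad xs" i] lipschitz[of z xs] by (simp add: r_def)
  then have near: "\<bar>grad z $ h - grad xs $ h\<bar> \<le> L * r" "\<bar>grad z $ jj - lam\<bar> \<le> L * r"
    using stationary_gradient_at_free[OF stat jj] by metis+
  from h consider (lower) "ereal (xs $ h) = l h" | (upper) "ereal (xs $ h) = u h"
    by (auto simp: active_plus_def active_set_def)
  then have "(ereal (xs $ h) = l h \<and> g < 0 \<or> ereal (xs $ h) = u h \<and> 0 < g) \<and> r * M < \<bar>g\<bar>"
  proof cases
    case lower
    then have "lam < grad xs $ h"
      using stat \<open>grad xs $ h \<noteq> lam\<close> by (force simp: stationary_def)
    then have "g < - (r * M)"
      using close near expand unfolding g_def r_def[symmetric] abs_le_iff by simp
    then show ?thesis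
      using lower \<open>0 \<le> r * M\<close> by simp
  next
    case upper
    then have "grad xs $ h < lam"
      using stat \<open>grad xs $ h \<noteq> lam\<close> by (force simp: stationary_def)
    then have "r * M < g"
      using close near expand unfolding g_def r_def[symmetric] abs_le_iff by simp
    then show ?thesis
      using upper \<open>0 \<le> r * M\<close> by simp
  qed
  moreover have "\<bar>z $ h - xs $ h\<bar> * M \<le> r * M"
    using component_le_norm_cart[of "z - xs" h] \<open>0 \<le> M\<close> by (simp add: r_def mult_right_mono)
  ultimately show "\<bar>z $ h - xs $ h\<bar> * M < \<bar>g\<bar>"
    and "(ereal (xs $ h) = l h \<and> g < 0) \<or> (ereal (xs $ h) = u h \<and> 0 < g)"
    by linarith+
qed

lemma lipschitz_constant_nonneg:
  fixes grad :: "real^'n::finite \<Rightarrow> real^'n"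
  assumes "\<And>y w. norm (grad y - grad w) \<le> L * norm (y - w)"
  shows "0 \<le> L"
  using assms[of "axis undefined 1" 0] by simp (meson norm_ge_zero order.trans)

lemma stepsize_constant_bounds:
  fixes Lij :: "'n::finite \<Rightarrow> 'n \<Rightarrow> real"
  assumes "0 < Al" "gamma < 1"
  defines "M \<equiv> max (1 / Al) (Max {Lij i k | i k. True} / (2 * (1 - gamma)))"
  shows "1 / Al \<le> M" "Lij a c \<le> 2 * (1 - gamma) * M"
proof -
  show "1 / Al \<le> M"
    by (simp add: M_def)
  have "{Lij i k | i k. True} = case_prod Lij ` UNIV"
    by auto
  then have "finite {Lij i k | i k. True}"
    by simp
  then have "Lij a c \<le> Max {Lij i k | i k. True}"
    by (rule Max_ge) blast
  then have "Lij a c / (2 * (1 - gamma)) \<le> M"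
    unfolding M_def using \<open>gamma < 1\<close> by (smt (verit) divide_right_mono)
  then show "Lij a c \<le> 2 * (1 - gamma) * M"
    using \<open>gamma < 1\<close> by (simp add: field_simps)
qed

lemma ac2cd_outer_iteration_fixes_strongly_active:
  fixes z :: "nat \<Rightarrow> nat \<Rightarrow> real^'n::finite"
  assumes alg: "ac2cd f grad l u b tau gamma delta Al Au x z j p A alpha"
    and deriv: "\<And>y. (f has_derivative (\<lambda>h. grad y \<bullet> h)) (at y)"
    and lipschitz: "\<And>y w. norm (grad y - grad w) \<le> L * norm (y - w)"
    and lip: "\<And>y s t. \<bar>grad (y + s *\<^sub>R (axis h 1 - axis (j k) 1)) \<bullet> (axis h 1 - axis (j k) 1)
                       - grad (y + t *\<^sub>R (axis h 1 - axis (j k) 1)) \<bullet> (axis h 1 - axis (j k) 1)\<bar>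
                     \<le> K * \<bar>s - t\<bar>"
    and params: "0 < Al" "1 / Al \<le> M" "K \<le> 2 * (1 - gamma) * M" "gamma \<le> 1" "0 \<le> delta" "delta \<le> 1"
    and stat: "stationary grad l u b xs lam"
    and h: "h \<in> active_plus grad l u xs lam" and jk: "j k \<notin> active_set l u xs"
    and close: "\<And>i. i \<in> {1..CARD('n)} \<Longrightarrow> norm (z k i - xs) * (2 * L + M) < \<bar>grad xs $ h - lam\<bar>"
    and interior: "\<And>i. i \<in> {1..CARD('n) + 1} \<Longrightarrow>
                     l (j k) < ereal (z k i $ j k) \<and> ereal (z k i $ j k) < u (j k)"
  shows "x (Suc k) $ h = xs $ h"
proof -
  have "h \<noteq> j k"
    using h jk by (auto simp: active_plus_def)
  have "0 \<le> M"
    using params(1,2) by (smt (verit) divide_pos_pos)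
  obtain i0 where i0: "i0 \<in> {1..CARD('n)}" "p k i0 = h"
    using ac2cd_outer_step(2)[OF alg, of k] by (metis bij_betw_def UNIV_I imageE)
  have "z k (CARD('n) + 1) $ h = xs $ h"
  proof (rule value_after_reset[where P = "\<lambda>i. p k i = h", OF i0])
    fix i
    assume i: "i \<in> {1..CARD('n)}"
    note step = ac2cd_inner_step[OF alg i, of k]
    show "z k (Suc i) $ h = xs $ h" if "p k i = h"
      using inner_step_lands_on_bound[OF step[unfolded that] deriv ac2cd_in_box(2)[OF alg params(1,5,6)]
          lip \<open>h \<noteq> j k\<close> params(1-4) strongly_active_gradient_gap[OF lipschitz stat h jk close[OF i] \<open>0 \<le> M\<close>]]
        interior i
      by auto
    show "z k (Suc i) $ h = z k i $ h" if "p k i \<noteq> h"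
      using inner_step_other_coordinate[OF step] that \<open>h \<noteq> j k\<close> by metis
  qed
  then show ?thesis
    using ac2cd_outer_step(4)[OF alg] by simp
qed

theorem theorem1:
  fixes f :: "real^'n \<Rightarrow> real" and grad :: "real^'n \<Rightarrow> real^'n"
    and l u :: "'n \<Rightarrow> ereal" and b L :: real and Lij :: "'n \<Rightarrow> 'n \<Rightarrow> real"
    and tau gamma delta Al Au :: real
    and x :: "nat \<Rightarrow> real^'n" and z :: "nat \<Rightarrow> nat \<Rightarrow> real^'n"
    and j :: "nat \<Rightarrow> 'n" and p :: "nat \<Rightarrow> nat \<Rightarrow> 'n" and A alpha :: "nat \<Rightarrow> nat \<Rightarrow> real"
    and xs :: "real^'n" and lam :: real and kA kj kz :: nat
  assumes n2: "CARD('n) \<ge> 2"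
    and l_fin: "\<forall>i. l i \<noteq> \<infinity>" and u_fin: "\<forall>i. u i \<noteq> -\<infinity>" and lu: "\<forall>i. l i < u i"
    and deriv: "\<forall>y. (f has_derivative (\<lambda>h. grad y \<bullet> h)) (at y)"
    and lipschitz: "\<forall>y w. norm (grad y - grad w) \<le> L * norm (y - w)"
    and Lij_pos: "\<forall>i k. i \<noteq> k \<longrightarrow> Lij i k > 0" and Lij_diag: "\<forall>i. Lij i i = 0"
    and Lij_lip: "\<forall>i k y s t. i \<noteq> k \<longrightarrow>
        \<bar>grad (y + s *\<^sub>R (axis i 1 - axis k 1)) \<bullet> (axis i 1 - axis k 1)
         - grad (y + t *\<^sub>R (axis i 1 - axis k 1)) \<bullet> (axis i 1 - axis k 1)\<bar> \<le> Lij i k * \<bar>s - t\<bar>"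
    and params: "0 < tau" "tau \<le> 1" "0 < gamma" "gamma < 1" "0 < delta" "delta < 1" "0 < Al" "Al \<le> Au"
    and alg: "ac2cd f grad l u b tau gamma delta Al Au x z j p A alpha"
    and L0_ne: "{y. feasible l u b y \<and> f y \<le> f (x 0)} \<noteq> {}"
    and L0_compact: "compact {y. feasible l u b y \<and> f y \<le> f (x 0)}"
    and L0_free: "\<forall>y\<in>{y. feasible l u b y \<and> f y \<le> f (x 0)}. \<exists>i. l i < ereal (y $ i) \<and> ereal (y $ i) < u i"
    and conv: "x \<longlonglongrightarrow> xs"
    and stat: "stationary grad l u b xs lam"
    and Aplus_ne: "active_plus grad l u xs lam \<noteq> {}"
    and kA: "\<forall>k\<ge>kA. \<forall>i\<in>{1..CARD('n)}. norm (z k i - xs) <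
          Min ((\<lambda>i. \<bar>grad xs $ i - lam\<bar>) ` active_plus grad l u xs lam)
          / (2 * L + max (1 / Al) (Max {Lij i k | i k. True} / (2 * (1 - gamma))))"
    and kA_first: "\<forall>k'<kA. \<not> (\<forall>k\<ge>k'. \<forall>i\<in>{1..CARD('n)}. norm (z k i - xs) <
          Min ((\<lambda>i. \<bar>grad xs $ i - lam\<bar>) ` active_plus grad l u xs lam)
          / (2 * L + max (1 / Al) (Max {Lij i k | i k. True} / (2 * (1 - gamma)))))"
    and kj: "\<forall>k\<ge>kj. j k \<notin> active_set l u xs"
    and kj_first: "\<forall>k'<kj. \<not> (\<forall>k\<ge>k'. j k \<notin> active_set l u xs)"
    and kz: "\<forall>k\<ge>kz. \<forall>i\<in>{1..CARD('n)+1}. l (j k) < ereal (z k i $ j k) \<and> ereal (z k i $ j k) < u (j k)"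
    and kz_first: "\<forall>k'<kz. \<not> (\<forall>k\<ge>k'. \<forall>i\<in>{1..CARD('n)+1}. l (j k) < ereal (z k i $ j k) \<and> ereal (z k i $ j k) < u (j k))"
    and order: "kA \<ge> max kj kz"
  shows "\<forall>k>kA. \<forall>h\<in>active_plus grad l u xs lam. x k $ h = xs $ h"
proof (intro allI impI ballI)
  fix k h
  assume "kA < k" and h: "h \<in> active_plus grad l u xs lam"
  then obtain k0 where k: "k = Suc k0" "kA \<le> k0"
    by (cases k) auto
  define M where "M = max (1 / Al) (Max {Lij i k | i k. True} / (2 * (1 - gamma)))"
  note M = stepsize_constant_bounds[OF params(7,4), of Lij, folded M_def]
  have "j k0 \<notin> active_set l u xs"
    using kj k(2) order by auto
  then have "h \<noteq> j k0"
    using h by (auto simp: active_plus_def)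
  have close: "norm (z k0 i - xs) * (2 * L + M) < \<bar>grad xs $ h - lam\<bar>" if "i \<in> {1..CARD('n)}" for i
  proof -
    have "0 < 2 * L + M"
      using lipschitz_constant_nonneg[OF lipschitz[rule_format]] M(1) params(7)
      by (smt (verit) divide_pos_pos)
    moreover have "Min ((\<lambda>i. \<bar>grad xs $ i - lam\<bar>) ` active_plus grad l u xs lam) \<le> \<bar>grad xs $ h - lam\<bar>"
      using h by (intro Min_le) auto
    ultimately show ?thesis
      using kA[folded M_def, rule_format, OF k(2) that] by (simp add: field_simps)
  qed
  show "x k $ h = xs $ h"
    unfolding k(1)
    using ac2cd_outer_iteration_fixes_strongly_active[OF alg deriv[rule_format] lipschitz[rule_format]
        Lij_lip[rule_format, OF \<open>h \<noteq> j k0\<close>] params(7) M less_imp_le[OF params(4)] _ _ stat h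
        \<open>j k0 \<notin> active_set l u xs\<close> close] kz k(2) order params
    by auto
qed

end
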